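(* Let $s\geq 2$ and let $G$ be either $G_{(s,0)}$ or $G_{(s,s)}$, acting faithfully and transitively on a set of $n$ points. Let $T=\langle u,v\rangle$ if $G=G_{(s,0)}$ and $T=\langle g,h\rangle$ if $G=G_{(s,s)}$. If $T$ is transitive, then $G=G_{(s,0)}$ and $n=s^2$.
   Context: $G_{(s,0)}$ is the Coxeter group $[3,3,3]=\langle\rho_0,\rho_1,\rho_2\mid \rho_i^2=1,\ (\rho_i\rho_j)^3=1\ (i\neq j)\rangle$ factored by $(\rho_0\rho_1\rho_2\rho_1)^s$ (group of the toroidal hypermap $(3,3,3)_{(s,0)}$); $G_{(s,s)}$ is $[3,3,3]$ factored by $(\rho_0\rho_1\rho_2)^{2s}$ (group of $(3,3,3)_{(s,s)}$). Translations: $u=\rho_0\rho_1\rho_2\rho_1$, $v=\rho_1 u\rho_1=\rho_1\rho_0\rho_1\rho_2$; $g=(\rho_0\rho_1\rho_2)^2$, $h=\rho_0 g\rho_0$. In each case $T$ is a normal abelian subgroup (the translation subgroup) of order $s^2$. *)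

theory Defs
  imports "HOL-Algebra.Sym_Groups" "HOL-Algebra.Generated_Groups"
begin

text \<open>Generators rho_0, rho_1, rho_2 of the Coxeter group [3,3,3]; words in them.\<close>
datatype gen = R0 | R1 | R2

type_synonym word = "gen list"

definition wpow :: "word \<Rightarrow> nat \<Rightarrow> word" where
  "wpow w k = concat (replicate k w)"

definition coxeter333_rels :: "word set" where
  "coxeter333_rels = {[a, a] | a. True} \<union> {wpow [a, b] 3 | a b. a \<noteq> b}"

definition G_s0_rels :: "nat \<Rightarrow> word set" where
  "G_s0_rels s = coxeter333_rels \<union> {wpow [R0, R1, R2, R1] s}"

definition G_ss_rels :: "nat \<Rightarrow> word set" where
  "G_ss_rels s = coxeter333_rels \<union> {wpow [R0, R1, R2] (2 * s)}"

text \<open>Equality in the group presented by the generators and the relators R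
  (all generators are involutions, so the monoid congruence generated by
  r = [] for r in R is the group presentation).\<close>
inductive word_eq :: "word set \<Rightarrow> word \<Rightarrow> word \<Rightarrow> bool" for R where
  refl: "word_eq R w w"
| sym: "word_eq R w w' \<Longrightarrow> word_eq R w' w"
| trans: "word_eq R w1 w2 \<Longrightarrow> word_eq R w2 w3 \<Longrightarrow> word_eq R w1 w3"
| rel: "r \<in> R \<Longrightarrow> word_eq R (a @ r @ b) (a @ b)"

definition word_eval :: "(gen \<Rightarrow> nat \<Rightarrow> nat) \<Rightarrow> word \<Rightarrow> nat \<Rightarrow> nat" where
  "word_eval rep w = foldr (\<lambda>a f. rep a \<circ> f) w id"

definition faithful_action :: "word set \<Rightarrow> nat \<Rightarrow> (gen \<Rightarrow> nat \<Rightarrow> nat) \<Rightarrow> bool" where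
  "faithful_action R n rep \<longleftrightarrow>
     (\<forall>a. rep a permutes {1..n}) \<and>
     (\<forall>w w'. word_eval rep w = word_eval rep w' \<longleftrightarrow> word_eq R w w')"

definition transitive_on :: "nat \<Rightarrow> (nat \<Rightarrow> nat) set \<Rightarrow> bool" where
  "transitive_on n P \<longleftrightarrow> (\<forall>x\<in>{1..n}. \<forall>y\<in>{1..n}. \<exists>p\<in>P. p x = y)"

definition u_word :: word where "u_word = [R0, R1, R2, R1]"
definition v_word :: word where "v_word = [R1, R0, R1, R2]"
definition g_word :: word where "g_word = wpow [R0, R1, R2] 2"
definition h_word :: word where "h_word = [R0] @ g_word @ [R0]"

datatype hypermap_kind = Kind_s0 | Kind_ss

definition kind_rels :: "hypermap_kind \<Rightarrow> nat \<Rightarrow> word set" where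
  "kind_rels k s = (case k of Kind_s0 \<Rightarrow> G_s0_rels s | Kind_ss \<Rightarrow> G_ss_rels s)"

definition kind_T_gens :: "hypermap_kind \<Rightarrow> word \<times> word" where
  "kind_T_gens k = (case k of Kind_s0 \<Rightarrow> (u_word, v_word) | Kind_ss \<Rightarrow> (g_word, h_word))"

end

theory Submission
  imports Defs
begin

text \<open>A permutation commuting with a transitive group is determined by the image of one point.
  Hence a transitive abelian permutation group of degree \<open>n\<close> is regular (it has order \<open>n\<close>)
  and contains every permutation that centralises it.

  In \<open>G\<^sub>(\<^sub>s\<^sub>,\<^sub>0\<^sub>)\<close> the translations \<open>u\<close>, \<open>v\<close> commute and have order dividing \<open>s\<close>,
  so \<open>T\<close> consists of the products \<open>u\<^sup>iv\<^sup>j\<close> with \<open>i, j < s\<close>; the affine action of [3,3,3]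
  on \<open>(\<int>/s)\<^sup>2\<close>, in which \<open>u\<^sup>iv\<^sup>j\<close> translates by \<open>(i, i + j)\<close>, shows they are distinct, so
  \<open>n = |T| = s\<^sup>2\<close>. In \<open>G\<^sub>(\<^sub>s\<^sub>,\<^sub>s\<^sub>)\<close> we have \<open>g = uv\<close> and \<open>h = u\<^sup>-\<^sup>2v\<close>, so \<open>T\<close> lies in the
  abelian group \<open>\<langle>u, v\<rangle>\<close> and \<open>u\<close> centralises \<open>T\<close>; transitivity of \<open>T\<close> would force \<open>u \<in> T\<close>.
  But in the action of [3,3,3] on \<open>\<int>/3\<close> by \<open>x \<mapsto> 2 - x\<close>, \<open>-x\<close>, \<open>-x\<close>, which factors
  through \<open>G\<^sub>(\<^sub>s\<^sub>,\<^sub>s\<^sub>)\<close>, the elements \<open>g\<close>, \<open>h\<close> act trivially and \<open>u\<close> does not.\<close>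

definition word_act :: "(gen \<Rightarrow> 'a \<Rightarrow> 'a) \<Rightarrow> word \<Rightarrow> 'a \<Rightarrow> 'a" where
  "word_act m w = foldr (\<lambda>a f. m a \<circ> f) w id"

lemma word_act_Nil [simp]: "word_act m [] = id"
  by (simp add: word_act_def)

lemma word_act_Cons [simp]: "word_act m (a # w) = m a \<circ> word_act m w"
  by (simp add: word_act_def)

lemma word_act_append [simp]: "word_act m (w @ w') = word_act m w \<circ> word_act m w'"
  by (induction w) (simp_all add: comp_assoc)

lemma word_eval_eq_word_act: "word_eval = word_act"
  by (intro ext) (simp add: word_eval_def word_act_def)

lemma word_act_wpow: "word_act m (wpow w k) = word_act m w ^^ k"
  by (induction k) (simp_all add: wpow_def)

lemma word_act_rev_comp:
  assumes "\<And>a. m a \<circ> m a = id"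
  shows "word_act m (rev w) \<circ> word_act m w = id"
proof (induction w)
  case (Cons a w)
  have "word_act m (rev (a # w)) \<circ> word_act m (a # w)
      = word_act m (rev w) \<circ> (m a \<circ> m a) \<circ> word_act m w"
    by (simp add: comp_assoc)
  also have "\<dots> = id"
    by (simp only: assms comp_id Cons.IH)
  finally show ?case .
qed simp

lemma word_eq_append_context: "word_eq R w w' \<Longrightarrow> word_eq R (x @ w @ y) (x @ w' @ y)"
proof (induction rule: word_eq.induct)
  case (rel r a b)
  show ?case using word_eq.rel[OF rel, of "x @ a" "b @ y"] by simp
qed (blast intro: word_eq.intros)+

lemma coxeter333_relsE:
  assumes "r \<in> coxeter333_rels"
  obtains a where "r = [a, a]" | a b where "a \<noteq> b" "r = [a, b, a, b, a, b]"
  using assms by (auto simp: coxeter333_rels_def wpow_def numeral_3_eq_3)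

lemma word_eq_cancel:
  assumes "coxeter333_rels \<subseteq> R"
  shows "word_eq R (x @ a # a # y) (x @ y)"
  using word_eq.rel[of "[a, a]" R x y] assms by (auto simp: coxeter333_rels_def)

lemma word_eq_braid:
  assumes R: "coxeter333_rels \<subseteq> R" and "a \<noteq> b"
  shows "word_eq R (x @ a # b # a # y) (x @ b # a # b # y)"
proof -
  have "word_eq R [a, b, a, b, a, b, b, a, b] [b, a, b]"
    using word_eq.rel[of "wpow [a, b] 3" R "[]" "[b, a, b]"] R \<open>a \<noteq> b\<close>
    by (auto simp: coxeter333_rels_def wpow_def numeral_3_eq_3)
  moreover have "word_eq R [a, b, a, b, a, b, b, a, b] [a, b, a]"
    using word_eq_cancel[OF R, of "[a, b, a, b, a]" b "[a, b]"]
      word_eq_cancel[OF R, of "[a, b, a, b]" a "[b]"]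
      word_eq_cancel[OF R, of "[a, b, a]" b "[]"]
    by (auto intro: word_eq.trans)
  ultimately have "word_eq R [a, b, a] [b, a, b]"
    by (meson word_eq.sym word_eq.trans)
  from word_eq_append_context[OF this, of x y] show ?thesis by simp
qed

text \<open>Concrete equalities of words in [3,3,3] are certified by lists of moves, which the
  simplifier evaluates.\<close>

datatype coxeter_move = Cancel nat | Insert nat gen | Braid nat

fun apply_move :: "coxeter_move \<Rightarrow> word \<Rightarrow> word option" where
  "apply_move (Cancel i) w =
     (case drop i w of a # b # y \<Rightarrow> if a = b then Some (take i w @ y) else None | _ \<Rightarrow> None)"
| "apply_move (Insert i a) w = Some (take i w @ a # a # drop i w)"
| "apply_move (Braid i) w =
     (case drop i w of
        a # b # c # y \<Rightarrow> if a = c \<and> a \<noteq> b then Some (take i w @ b # a # b # y) else None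
      | _ \<Rightarrow> None)"

fun apply_moves :: "coxeter_move list \<Rightarrow> word \<Rightarrow> word option" where
  "apply_moves [] w = Some w"
| "apply_moves (m # ms) w = Option.bind (apply_move m w) (apply_moves ms)"

lemma apply_move_word_eq:
  assumes R: "coxeter333_rels \<subseteq> R" and move: "apply_move m w = Some w'"
  shows "word_eq R w w'"
proof (cases m)
  case (Cancel i)
  from move obtain a y where d: "drop i w = a # a # y" and w': "w' = take i w @ y"
    unfolding Cancel by (fastforce split: list.split_asm if_split_asm)
  have w_split: "take i w @ a # a # y = w" by (simp only: d[symmetric] append_take_drop_id)
  show ?thesis using word_eq_cancel[OF R, of "take i w" a y] unfolding w' w_split .
next
  case (Insert i a)
  then show ?thesis
    using move word_eq.sym[OF word_eq_cancel[OF R, of "take i w" a "drop i w"]] by simp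
next
  case (Braid i)
  from move obtain a b y
    where "a \<noteq> b" and d: "drop i w = a # b # a # y" and w': "w' = take i w @ b # a # b # y"
    unfolding Braid by (fastforce split: list.split_asm if_split_asm)
  have w_split: "take i w @ a # b # a # y = w" by (simp only: d[symmetric] append_take_drop_id)
  show ?thesis using word_eq_braid[OF R \<open>a \<noteq> b\<close>, of "take i w" y] unfolding w' w_split .
qed

lemma apply_moves_word_eq:
  "coxeter333_rels \<subseteq> R \<Longrightarrow> apply_moves ms w = Some w' \<Longrightarrow> word_eq R w w'"
proof (induction ms arbitrary: w)
  case Nil
  then show ?case by (simp add: word_eq.refl)
next
  case (Cons m ms)
  then obtain w1 where "apply_move m w = Some w1" "apply_moves ms w1 = Some w'"
    by (auto split: Option.bind_splits)
  with Cons show ?case by (metis apply_move_word_eq word_eq.trans)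
qed

lemma word_eq_invariant:
  assumes cong: "\<And>a p q. N p = N q \<Longrightarrow> N (m a p) = N (m a q)"
    and rels: "\<And>r p. r \<in> R \<Longrightarrow> N (word_act m r p) = N p"
    and "word_eq R w w'"
  shows "N (word_act m w p) = N (word_act m w' p)"
proof -
  have word_cong: "N (word_act m x p) = N (word_act m x q)" if "N p = N q" for x p q
    using that by (induction x arbitrary: p q) (auto intro: cong)
  from \<open>word_eq R w w'\<close> show ?thesis
  proof (induction arbitrary: p rule: word_eq.induct)
    case (rel r a b)
    show ?case using word_cong[OF rels[OF rel, of "word_act m b p"], of a] by simp
  next
    case (sym w w')
    show ?case using sym.IH[of p] by simp
  next
    case (trans w1 w2 w3)
    show ?case using trans.IH[of p] by simp
  qed simp
qed

text \<open>In this affine action \<open>u\<close> and \<open>v\<close> are the translations by (1,1) and (0,1).\<close>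

fun rho_affine :: "gen \<Rightarrow> int \<times> int \<Rightarrow> int \<times> int" where
  "rho_affine R0 (x, y) = (1 - y, 1 - x)"
| "rho_affine R1 (x, y) = (y - x, y)"
| "rho_affine R2 (x, y) = (x, x - y)"

lemma rho_affine_coxeter333_rel:
  assumes "r \<in> coxeter333_rels"
  shows "word_act rho_affine r p = p"
  using assms
proof (cases rule: coxeter333_relsE)
  case (1 a)
  then show ?thesis by (cases a; cases p) simp_all
next
  case (2 a b)
  then show ?thesis by (cases a; cases b; cases p) simp_all
qed

lemma rho_affine_u_pow: "word_act rho_affine (wpow u_word i) (x, y) = (x + int i, y + int i)"
  by (induction i) (auto simp: wpow_def u_word_def)

lemma rho_affine_v_pow: "word_act rho_affine (wpow v_word j) (x, y) = (x, y + int j)"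
  by (induction j) (auto simp: wpow_def v_word_def)

definition mod_pair :: "nat \<Rightarrow> int \<times> int \<Rightarrow> int \<times> int" where
  "mod_pair s = map_prod (\<lambda>x. x mod int s) (\<lambda>y. y mod int s)"

lemma G_s0_word_eq_rho_affine:
  assumes "word_eq (G_s0_rels s) w w'"
  shows "mod_pair s (word_act rho_affine w p) = mod_pair s (word_act rho_affine w' p)"
proof (rule word_eq_invariant[OF _ _ assms])
  show "mod_pair s (rho_affine a p) = mod_pair s (rho_affine a q)"
    if "mod_pair s p = mod_pair s q" for a p q
    using that by (cases a; cases p; cases q) (auto simp: mod_pair_def intro!: mod_diff_cong)
  show "mod_pair s (word_act rho_affine r p) = mod_pair s p" if "r \<in> G_s0_rels s" for r p
    using that rho_affine_u_pow[of s]
    by (cases p) (auto simp: mod_pair_def G_s0_rels_def rho_affine_coxeter333_rel simp flip: u_word_def)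
qed

lemma G_s0_translation_powers_inj:
  assumes "word_eq (G_s0_rels s) (wpow u_word i @ wpow v_word j) (wpow u_word i' @ wpow v_word j')"
    and "i < s" "j < s" "i' < s" "j' < s"
  shows "i = i' \<and> j = j'"
proof -
  from G_s0_word_eq_rho_affine[OF assms(1), of "(0, 0)"]
  have i: "int i mod int s = int i' mod int s"
    and ij: "(int i + int j) mod int s = (int i' + int j') mod int s"
    by (simp_all add: mod_pair_def rho_affine_u_pow rho_affine_v_pow add.commute)
  have "int j mod int s = int j' mod int s"
    using mod_diff_cong[OF ij i] by simp
  with i show ?thesis using assms(2-5) by (simp flip: of_nat_mod)
qed

lemma G_s0_nontrivial:
  assumes "2 \<le> s"
  shows "\<not> word_eq (G_s0_rels s) [] [R0]"
proof
  assume "word_eq (G_s0_rels s) [] [R0]"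
  from G_s0_word_eq_rho_affine[OF this, of "(0, 0)"] have "1 mod int s = 0"
    by (simp add: mod_pair_def)
  with assms show False by simp
qed

fun rho_mod3 :: "gen \<Rightarrow> int \<Rightarrow> int" where
  "rho_mod3 R0 x = 2 - x"
| "rho_mod3 R1 x = - x"
| "rho_mod3 R2 x = - x"

lemma rho_mod3_coxeter333_rel:
  assumes "r \<in> coxeter333_rels"
  shows "word_act rho_mod3 r x mod 3 = x mod 3"
  using assms
proof (cases rule: coxeter333_relsE)
  case (1 a)
  then show ?thesis by (cases a) simp_all
next
  case (2 a b)
  then show ?thesis by (cases a; cases b) (simp_all, presburger+)
qed

lemma rho_mod3_G_ss_rel:
  assumes "r \<in> G_ss_rels s"
  shows "word_act rho_mod3 r x mod 3 = x mod 3"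
proof -
  have "word_act rho_mod3 (wpow [R0, R1, R2] (2 * s)) = (word_act rho_mod3 [R0, R1, R2] ^^ 2) ^^ s"
    by (simp only: word_act_wpow funpow_mult)
  also have "word_act rho_mod3 [R0, R1, R2] ^^ 2 = id"
    by (rule ext) (simp add: numeral_2_eq_2)
  finally have "word_act rho_mod3 (wpow [R0, R1, R2] (2 * s)) = id"
    by (simp only: id_funpow)
  with assms rho_mod3_coxeter333_rel show ?thesis
    by (auto simp: G_ss_rels_def)
qed

lemma G_ss_word_eq_rho_mod3:
  assumes "word_eq (G_ss_rels s) w w'"
  shows "word_act rho_mod3 w x mod 3 = word_act rho_mod3 w' x mod 3"
proof (rule word_eq_invariant[OF _ rho_mod3_G_ss_rel assms])
  fix a and p q :: int
  assume pq: "p mod 3 = q mod 3"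
  show "rho_mod3 a p mod 3 = rho_mod3 a q mod 3"
    using mod_diff_cong[OF HOL.refl pq, of 2] mod_minus_cong[OF pq] by (cases a) simp_all
qed

lemma G_ss_nontrivial: "\<not> word_eq (G_ss_rels s) [] [R0]"
  using G_ss_word_eq_rho_mod3[of s "[]" "[R0]" 0] by auto

lemma rho_mod3_g_h [simp]:
  "word_act rho_mod3 g_word = id" "word_act rho_mod3 (rev g_word) = id"
  "word_act rho_mod3 h_word = id" "word_act rho_mod3 (rev h_word) = id"
  by (simp_all add: g_word_def h_word_def wpow_def numeral_2_eq_2 fun_eq_iff)

lemma commuting_permutes_eq:
  assumes "transitive_on n P" "x \<in> {1..n}"
    and "f permutes {1..n}" "g permutes {1..n}"
    and "\<forall>p\<in>P. f \<circ> p = p \<circ> f" "\<forall>p\<in>P. g \<circ> p = p \<circ> g"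
    and "f x = g x"
  shows "f = g"
proof
  fix y
  show "f y = g y"
  proof (cases "y \<in> {1..n}")
    case True
    with assms(1,2) obtain p where p: "p \<in> P" "p x = y"
      unfolding transitive_on_def by blast
    have "f y = p (f x)" using fun_cong[OF assms(5)[rule_format, OF p(1)], of x] p(2) by simp
    moreover have "g y = p (g x)" using fun_cong[OF assms(6)[rule_format, OF p(1)], of x] p(2) by simp
    ultimately show ?thesis using assms(7) by simp
  next
    case False
    show ?thesis using permutes_not_in[OF assms(3) False] permutes_not_in[OF assms(4) False] by simp
  qed
qed

lemma card_transitive_abelian:
  assumes "transitive_on n P" "\<forall>p\<in>P. p permutes {1..n}"
    and "\<forall>p\<in>P. \<forall>q\<in>P. p \<circ> q = q \<circ> p" "1 \<le> n"
  shows "card P = n"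
proof -
  have one: "1 \<in> {1..n}" using assms(4) by simp
  have "inj_on (\<lambda>p. p 1) P"
  proof (rule inj_onI)
    fix p q
    assume pq: "p \<in> P" "q \<in> P" "p 1 = q 1"
    show "p = q"
    proof (rule commuting_permutes_eq[OF assms(1) one])
      show "p permutes {1..n}" "q permutes {1..n}" using assms(2) pq by blast+
      show "\<forall>r\<in>P. p \<circ> r = r \<circ> p" "\<forall>r\<in>P. q \<circ> r = r \<circ> q" using assms(3) pq by blast+
    qed (fact pq(3))
  qed
  moreover have "(\<lambda>p. p 1) ` P = {1..n}"
  proof
    show "(\<lambda>p. p 1) ` P \<subseteq> {1..n}"
    proof clarify
      fix p
      assume "p \<in> P"
      then show "p 1 \<in> {1..n}" using permutes_in_image[of p "{1..n}" 1] assms(2) one by blast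
    qed
    show "{1..n} \<subseteq> (\<lambda>p. p 1) ` P"
    proof
      fix y
      assume "y \<in> {1..n}"
      with assms(1) one obtain p where "p \<in> P" "p 1 = y"
        unfolding transitive_on_def by blast
      then show "y \<in> (\<lambda>p. p 1) ` P" by blast
    qed
  qed
  ultimately show ?thesis using card_image[of "\<lambda>p. p 1" P] by simp
qed

lemma mem_transitive_abelian_if_commute:
  assumes "transitive_on n P" "\<forall>p\<in>P. p permutes {1..n}"
    and "\<forall>p\<in>P. \<forall>q\<in>P. p \<circ> q = q \<circ> p" "1 \<le> n"
    and "f permutes {1..n}" "\<forall>p\<in>P. f \<circ> p = p \<circ> f"
  shows "f \<in> P"
proof -
  have one: "1 \<in> {1..n}" using assms(4) by simp
  then have "f 1 \<in> {1..n}" using permutes_in_image[OF assms(5)] by blast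
  with assms(1) one obtain p where p: "p \<in> P" "p 1 = f 1"
    unfolding transitive_on_def by blast
  have "f = p"
  proof (rule commuting_permutes_eq[OF assms(1) one assms(5)])
    show "p permutes {1..n}" "\<forall>q\<in>P. p \<circ> q = q \<circ> p" using assms(2,3) p(1) by blast+
    show "\<forall>q\<in>P. f \<circ> q = q \<circ> f" by (fact assms(6))
    show "f 1 = p 1" using p(2) by simp
  qed
  with p show ?thesis by simp
qed

lemma generate_sym_group_permutes:
  "A \<subseteq> carrier (sym_group n) \<Longrightarrow> p \<in> generate (sym_group n) A \<Longrightarrow> p permutes {1..n}"
  using group.generate_in_carrier[OF sym_group_is_group] sym_group_carrier by blast

lemma generate_sym_group_commute:
  assumes "A \<subseteq> carrier (sym_group n)" "\<forall>a\<in>A. a \<circ> f = f \<circ> a"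
    and "p \<in> generate (sym_group n) A"
  shows "p \<circ> f = f \<circ> p"
  using assms(3)
proof induction
  case one
  then show ?case by (simp add: sym_group_one)
next
  case (incl h)
  with assms(2) show ?case by blast
next
  case (inv h)
  with assms have h: "h permutes {1..n}" "h \<circ> f = f \<circ> h" by (auto simp: sym_group_carrier)
  have "inv' h \<circ> f = f \<circ> inv' h"
  proof
    fix x
    have "inv' h (f x) = inv' h (f (h (inv' h x)))" by (simp add: permutes_inverses(1)[OF h(1)])
    also have "\<dots> = inv' h (h (f (inv' h x)))" using fun_cong[OF h(2), of "inv' h x"] by simp
    also have "\<dots> = f (inv' h x)" by (simp add: permutes_inverses(2)[OF h(1)])
    finally show "(inv' h \<circ> f) x = (f \<circ> inv' h) x" by simp
  qed
  moreover have "h \<in> carrier (sym_group n)" using inv assms(1) by blast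
  ultimately show ?case by (simp only: sym_group_inv_equality)
next
  case (eng h1 h2)
  then show ?case by (simp add: sym_group_mult) (metis comp_assoc)
qed

lemma generate_sym_group_abelian:
  assumes "A \<subseteq> carrier (sym_group n)" "\<forall>a\<in>A. \<forall>b\<in>A. a \<circ> b = b \<circ> a"
    and "p \<in> generate (sym_group n) A" "q \<in> generate (sym_group n) A"
  shows "p \<circ> q = q \<circ> p"
proof -
  have "\<forall>a\<in>A. a \<circ> q = q \<circ> a"
    using generate_sym_group_commute[OF assms(1) _ assms(4)] assms(2) by metis
  from generate_sym_group_commute[OF assms(1) this assms(3)] show ?thesis .
qed

lemma funpow_in_generate_sym_group:
  "p \<in> generate (sym_group n) A \<Longrightarrow> p ^^ k \<in> generate (sym_group n) A"
proof (induction k)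
  case 0
  show ?case using generate.one[of "sym_group n" A] by (simp only: funpow.simps(1) sym_group_one)
next
  case (Suc k)
  then show ?case
    using generate.eng[of p "sym_group n" A "p ^^ k"] by (simp only: funpow.simps(2) sym_group_mult)
qed

lemma funpow_mod_of_funpow_id: "f ^^ s = id \<Longrightarrow> f ^^ (m mod s) = f ^^ m"
  by (rule ext) (simp add: funpow_mod_eq)

lemma inv_eq_funpow_pred:
  assumes "f ^^ s = id" "0 < s"
  shows "inv' f = f ^^ (s - 1)"
proof (rule inv_unique_comp)
  have "Suc (s - 1) = s" using assms(2) by simp
  then show "f \<circ> f ^^ (s - 1) = id" "f ^^ (s - 1) \<circ> f = id"
    using assms(1) by (metis funpow.simps(2), metis funpow_Suc_right)
qed

lemma comp_funpow_commute: "f \<circ> g = g \<circ> f \<Longrightarrow> f \<circ> g ^^ j = g ^^ j \<circ> f"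
  by (induction j) (simp_all, metis comp_assoc)

lemma funpow_comp_funpow_commute: "f \<circ> g = g \<circ> f \<Longrightarrow> f ^^ i \<circ> g ^^ j = g ^^ j \<circ> f ^^ i"
  by (metis comp_funpow_commute)

lemma generate_commuting_pair:
  assumes U: "U permutes {1..n}" and V: "V permutes {1..n}" and UV: "U \<circ> V = V \<circ> U"
    and Us: "U ^^ s = id" and Vs: "V ^^ s = id" and "0 < s"
  shows "generate (sym_group n) {U, V} = (\<lambda>(i, j). U ^^ i \<circ> V ^^ j) ` ({..<s} \<times> {..<s})"
proof -
  define e where "e = (\<lambda>(i::nat, j::nat). U ^^ i \<circ> V ^^ j)"
  have e_mem: "e (i, j) \<in> e ` ({..<s} \<times> {..<s})" for i j
  proof -
    have "e (i, j) = e (i mod s, j mod s)"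
      by (simp add: e_def funpow_mod_of_funpow_id[OF Us] funpow_mod_of_funpow_id[OF Vs])
    then show ?thesis using \<open>0 < s\<close> by simp
  qed
  have e_comp: "e (i, j) \<circ> e (i', j') = e (i + i', j + j')" for i j i' j'
  proof -
    have "V ^^ j \<circ> U ^^ i' = U ^^ i' \<circ> V ^^ j"
      by (rule funpow_comp_funpow_commute[OF UV[symmetric]])
    then show ?thesis unfolding e_def by (simp add: funpow_add) (metis comp_assoc)
  qed
  have "generate (sym_group n) {U, V} \<subseteq> e ` ({..<s} \<times> {..<s})"
  proof
    fix p
    assume "p \<in> generate (sym_group n) {U, V}"
    then show "p \<in> e ` ({..<s} \<times> {..<s})"
    proof induction
      case one
      have "e (0, 0) = id" by (simp add: e_def)
      then show ?case using e_mem[of 0 0] by (simp only: sym_group_one)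
    next
      case (incl h)
      have "e (1, 0) = U" "e (0, 1) = V" by (simp_all add: e_def)
      with incl show ?case using e_mem[of 1 0] e_mem[of 0 1] by auto
    next
      case (inv h)
      then have "h \<in> carrier (sym_group n)" using U V by (auto simp: sym_group_carrier)
      moreover have "e (s - 1, 0) = inv' U" "e (0, s - 1) = inv' V"
        by (simp_all add: e_def inv_eq_funpow_pred[OF Us \<open>0 < s\<close>] inv_eq_funpow_pred[OF Vs \<open>0 < s\<close>])
      then have "inv' h \<in> e ` ({..<s} \<times> {..<s})"
        using inv e_mem[of "s - 1" 0] e_mem[of 0 "s - 1"] by auto
      ultimately show ?case by (simp only: sym_group_inv_equality)
    next
      case (eng h1 h2)
      then obtain i j i' j' where "h1 = e (i, j)" "h2 = e (i', j')" by blast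
      then have "h1 \<otimes>\<^bsub>sym_group n\<^esub> h2 = e (i + i', j + j')"
        by (simp only: sym_group_mult e_comp)
      then show ?case using e_mem by (simp only:)
    qed
  qed
  moreover have "e ` ({..<s} \<times> {..<s}) \<subseteq> generate (sym_group n) {U, V}"
  proof clarify
    fix i j
    have "U ^^ i \<in> generate (sym_group n) {U, V}" "V ^^ j \<in> generate (sym_group n) {U, V}"
      by (simp_all add: funpow_in_generate_sym_group generate.incl)
    then show "e (i, j) \<in> generate (sym_group n) {U, V}"
      using generate.eng[of "U ^^ i" "sym_group n" "{U, V}" "V ^^ j"]
      by (simp only: e_def sym_group_mult case_prod_conv)
  qed
  ultimately show ?thesis unfolding e_def by blast
qed

lemma funpow_conj_involution: "W \<circ> W = id \<Longrightarrow> (W \<circ> U \<circ> W) ^^ k = W \<circ> U ^^ k \<circ> W"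
proof (induction k)
  case 0
  then show ?case by (simp only: funpow.simps(1) comp_id)
next
  case (Suc k)
  have WW: "W \<circ> (W \<circ> f) = f" for f
    by (simp only: comp_assoc[symmetric] Suc.prems id_comp)
  have "(W \<circ> U \<circ> W) ^^ Suc k = (W \<circ> U \<circ> W) \<circ> (W \<circ> U ^^ k \<circ> W)"
    by (simp only: funpow.simps(2) Suc.IH[OF Suc.prems])
  also have "\<dots> = W \<circ> U ^^ Suc k \<circ> W"
    by (simp only: funpow.simps(2) comp_assoc WW)
  finally show ?case .
qed

locale coxeter333_action =
  fixes R :: "word set" and n :: nat and rep :: "gen \<Rightarrow> nat \<Rightarrow> nat"
  assumes faithful: "faithful_action R n rep"
    and coxeter333_rels_subset: "coxeter333_rels \<subseteq> R"
begin

lemma word_act_permutes: "word_act rep w permutes {1..n}"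
proof (induction w)
  case Nil
  show ?case by (simp only: word_act_Nil permutes_id)
next
  case (Cons a w)
  have "rep a permutes {1..n}"
    using faithful by (simp add: faithful_action_def)
  then show ?case unfolding word_act_Cons by (rule permutes_compose[OF Cons.IH])
qed

lemma word_act_in_carrier: "word_act rep w \<in> carrier (sym_group n)"
  unfolding sym_group_carrier by (rule word_act_permutes)

lemma word_act_eq_iff: "word_act rep w = word_act rep w' \<longleftrightarrow> word_eq R w w'"
  using faithful by (simp add: faithful_action_def word_eval_eq_word_act)

lemma word_act_eq_if_moves: "apply_moves ms w = Some w' \<Longrightarrow> word_act rep w = word_act rep w'"
  using apply_moves_word_eq[OF coxeter333_rels_subset] word_act_eq_iff by blast

lemma rep_involution: "rep a \<circ> rep a = id"
  using word_act_eq_if_moves[of "[Cancel 0]" "[a, a]" "[]"] by simp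

lemma inv_word_act: "inv' (word_act rep w) = word_act rep (rev w)"
  using word_act_rev_comp[where w = w, OF rep_involution]
    word_act_rev_comp[where w = "rev w", OF rep_involution]
  by (intro inv_unique_comp) simp_all

lemma one_le_card: "\<not> word_eq R [] [R0] \<Longrightarrow> 1 \<le> n"
  using word_act_permutes[of "[]"] word_act_permutes[of "[R0]"] word_act_eq_iff[of "[]" "[R0]"]
  by (cases n) simp_all

lemma translations_commute:
  "word_act rep u_word \<circ> word_act rep v_word = word_act rep v_word \<circ> word_act rep u_word"
  using word_act_eq_if_moves[of "[Cancel 3, Insert 0 R1, Braid 1, Braid 3, Braid 5]"
      "u_word @ v_word" "v_word @ u_word"]
  by (simp add: u_word_def v_word_def comp_assoc)

abbreviation translation_group :: "(nat \<Rightarrow> nat) set" where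
  "translation_group \<equiv> generate (sym_group n) {word_act rep u_word, word_act rep v_word}"

lemma translation_group_abelian:
  assumes "p \<in> translation_group" and "q \<in> translation_group"
  shows "p \<circ> q = q \<circ> p"
proof (rule generate_sym_group_abelian[OF _ _ assms])
  show "{word_act rep u_word, word_act rep v_word} \<subseteq> carrier (sym_group n)"
    by (simp add: word_act_in_carrier)
  show "\<forall>a\<in>{word_act rep u_word, word_act rep v_word}.
      \<forall>b\<in>{word_act rep u_word, word_act rep v_word}. a \<circ> b = b \<circ> a"
    using translations_commute by simp
qed

lemma card_translation_group:
  assumes "transitive_on n translation_group" and "\<not> word_eq R [] [R0]"
  shows "card translation_group = n"
proof (rule card_transitive_abelian[OF assms(1)])
  show "\<forall>p\<in>translation_group. p permutes {1..n}"
    by (intro ballI generate_sym_group_permutes) (simp_all add: word_act_in_carrier)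
  show "\<forall>p\<in>translation_group. \<forall>q\<in>translation_group. p \<circ> q = q \<circ> p"
    by (intro ballI translation_group_abelian)
  show "1 \<le> n"
    by (rule one_le_card[OF assms(2)])
qed

lemma generate_word_acts_subset:
  assumes "[] \<in> S" "\<And>w w'. w \<in> S \<Longrightarrow> w' \<in> S \<Longrightarrow> w @ w' \<in> S" "W \<subseteq> S" "rev ` W \<subseteq> S"
  shows "generate (sym_group n) (word_act rep ` W) \<subseteq> word_act rep ` S"
proof
  fix p
  assume "p \<in> generate (sym_group n) (word_act rep ` W)"
  then show "p \<in> word_act rep ` S"
  proof induction
    case one
    show ?case using assms(1)
      by (intro image_eqI[where x = "[]"]) (simp_all only: word_act_Nil sym_group_one)
  next
    case (incl h)
    with assms(3) show ?case by blast
  next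
    case (inv h)
    then obtain w where "w \<in> W" "h = word_act rep w" by blast
    moreover have "inv\<^bsub>sym_group n\<^esub> word_act rep w = word_act rep (rev w)"
      by (simp only: sym_group_inv_equality[OF word_act_in_carrier] inv_word_act)
    ultimately show ?case using assms(4) by auto
  next
    case (eng h1 h2)
    then obtain w1 w2 where "w1 \<in> S" "w2 \<in> S" "h1 = word_act rep w1" "h2 = word_act rep w2" by blast
    then have "h1 \<otimes>\<^bsub>sym_group n\<^esub> h2 = word_act rep (w1 @ w2)" "w1 @ w2 \<in> S"
      by (simp_all add: sym_group_mult assms(2))
    then show ?case by blast
  qed
qed

end

lemma G_s0_translation_group_card:
  assumes "coxeter333_action (G_s0_rels s) n rep" and "2 \<le> s"
  shows "card (generate (sym_group n) {word_act rep u_word, word_act rep v_word}) = s ^ 2"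
proof -
  interpret coxeter333_action "G_s0_rels s" n rep by fact
  define U V where "U = word_act rep u_word" and "V = word_act rep v_word"
  have Us: "U ^^ s = id"
  proof -
    have "word_eq (G_s0_rels s) ([] @ wpow u_word s @ []) ([] @ [])"
      by (rule word_eq.rel) (simp add: G_s0_rels_def u_word_def)
    then show ?thesis using word_act_eq_iff[of "wpow u_word s" "[]"] by (simp add: U_def word_act_wpow)
  qed
  have "V = rep R1 \<circ> U \<circ> rep R1"
    using word_act_eq_if_moves[of "[Cancel 4]" "[R1] @ u_word @ [R1]" v_word]
    by (simp add: U_def V_def u_word_def v_word_def comp_assoc)
  then have Vs: "V ^^ s = id"
    by (simp only: funpow_conj_involution[OF rep_involution] Us comp_id rep_involution)
  define e where "e = (\<lambda>(i::nat, j::nat). U ^^ i \<circ> V ^^ j)"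
  have "U permutes {1..n}" "V permutes {1..n}"
    unfolding U_def V_def by (rule word_act_permutes)+
  moreover have "U \<circ> V = V \<circ> U"
    unfolding U_def V_def by (rule translations_commute)
  ultimately have "generate (sym_group n) {U, V} = e ` ({..<s} \<times> {..<s})"
    unfolding e_def using assms(2) by (intro generate_commuting_pair[OF _ _ _ Us Vs]) simp_all
  moreover have "inj_on e ({..<s} \<times> {..<s})"
  proof (rule inj_onI, clarify)
    fix i j i' j'
    assume "e (i, j) = e (i', j')" and bounds: "i < s" "j < s" "i' < s" "j' < s"
    then have "word_act rep (wpow u_word i @ wpow v_word j) = word_act rep (wpow u_word i' @ wpow v_word j')"
      by (simp add: e_def U_def V_def word_act_wpow)
    then show "i = i' \<and> j = j'"
      unfolding word_act_eq_iff using G_s0_translation_powers_inj bounds by blast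
  qed
  ultimately show ?thesis by (simp add: U_def V_def card_image card_cartesian_product power2_eq_square)
qed

lemma G_ss_translation_group_intransitive:
  assumes "coxeter333_action (G_ss_rels s) n rep"
  shows "\<not> transitive_on n (generate (sym_group n) {word_act rep g_word, word_act rep h_word})"
proof
  interpret coxeter333_action "G_ss_rels s" n rep by fact
  define U V where "U = word_act rep u_word" and "V = word_act rep v_word"
  define T where "T = generate (sym_group n) {word_act rep g_word, word_act rep h_word}"
  assume transitive: "transitive_on n T"
  have gen_carrier: "{U, V} \<subseteq> carrier (sym_group n)"
    by (simp add: U_def V_def word_act_in_carrier)
  have T_subset: "T \<subseteq> generate (sym_group n) {U, V}"
  proof -
    have inv_U: "inv\<^bsub>sym_group n\<^esub> U = word_act rep (rev u_word)"
      by (simp only: U_def sym_group_inv_equality[OF word_act_in_carrier] inv_word_act)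
    have "word_act rep g_word = word_act rep (u_word @ v_word)"
      by (rule HOL.sym, rule word_act_eq_if_moves[of "[Cancel 3]"])
        (simp add: u_word_def v_word_def g_word_def wpow_def numeral_2_eq_2)
    then have "word_act rep g_word = U \<otimes>\<^bsub>sym_group n\<^esub> V"
      by (simp add: U_def V_def sym_group_mult)
    moreover have "word_act rep h_word = word_act rep (rev u_word @ rev u_word @ v_word)"
      by (rule word_act_eq_if_moves[of
            "[Cancel 0, Insert 2 R1, Braid 3, Braid 5, Insert 6 R1, Insert 7 R0, Braid 8]"])
        (simp add: u_word_def v_word_def h_word_def g_word_def wpow_def numeral_2_eq_2)
    then have "word_act rep h_word
        = inv\<^bsub>sym_group n\<^esub> U \<otimes>\<^bsub>sym_group n\<^esub> inv\<^bsub>sym_group n\<^esub> U \<otimes>\<^bsub>sym_group n\<^esub> V"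
      by (simp add: inv_U V_def sym_group_mult comp_assoc)
    ultimately have "{word_act rep g_word, word_act rep h_word} \<subseteq> generate (sym_group n) {U, V}"
      by (auto intro: generate.intros)
    then show ?thesis unfolding T_def
      by (intro group.generate_subgroup_incl[OF sym_group_is_group]
          group.generate_is_subgroup[OF sym_group_is_group gen_carrier])
  qed
  have "U \<in> T"
  proof (rule mem_transitive_abelian_if_commute[OF transitive])
    show "\<forall>p\<in>T. p permutes {1..n}"
      using T_subset generate_sym_group_permutes[OF gen_carrier] by blast
    show "\<forall>p\<in>T. \<forall>q\<in>T. p \<circ> q = q \<circ> p" "\<forall>p\<in>T. U \<circ> p = p \<circ> U"
      using translation_group_abelian T_subset generate.incl[of U "{U, V}"]
      unfolding U_def V_def by blast+
    show "1 \<le> n" by (rule one_le_card[OF G_ss_nontrivial])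
    show "U permutes {1..n}" unfolding U_def by (rule word_act_permutes)
  qed
  moreover have "T \<subseteq> word_act rep ` {w. word_act rho_mod3 w = id}"
    unfolding T_def using generate_word_acts_subset[of "{w. word_act rho_mod3 w = id}" "{g_word, h_word}"]
    by simp
  ultimately obtain w where "word_act rho_mod3 w = id" "word_eq (G_ss_rels s) u_word w"
    using word_act_eq_iff by (auto simp: U_def)
  then show False
    using G_ss_word_eq_rho_mod3[of s u_word w 0] by (simp add: u_word_def)
qed

theorem mainTheorem5:
  fixes s n :: nat and k :: hypermap_kind and rep :: "gen \<Rightarrow> nat \<Rightarrow> nat"
  assumes "s \<ge> 2"
    and "faithful_action (kind_rels k s) n rep"
    and "transitive_on n (word_eval rep ` UNIV)"
    and "transitive_on n (generate (sym_group n)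
           {word_eval rep (fst (kind_T_gens k)), word_eval rep (snd (kind_T_gens k))})"
  shows "k = Kind_s0 \<and> n = s ^ 2"
proof (cases k)
  case Kind_s0
  then have act: "coxeter333_action (G_s0_rels s) n rep"
    using assms(2) by (auto simp: coxeter333_action_def kind_rels_def G_s0_rels_def)
  have "card (generate (sym_group n) {word_act rep u_word, word_act rep v_word}) = n"
    using coxeter333_action.card_translation_group[OF act] assms(4) Kind_s0 G_s0_nontrivial[OF assms(1)]
    by (simp add: kind_T_gens_def word_eval_eq_word_act)
  with G_s0_translation_group_card[OF act assms(1)] Kind_s0 show ?thesis by simp
next
  case Kind_ss
  then have "coxeter333_action (G_ss_rels s) n rep"
    using assms(2) by (auto simp: coxeter333_action_def kind_rels_def G_ss_rels_def)
  with assms(4) Kind_ss show ?thesis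
    using G_ss_translation_group_intransitive by (simp add: kind_T_gens_def word_eval_eq_word_act)
qed

end
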